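(* The function $\mu_{\mathcal{S}_\varepsilon}$, defined on Borel subsets $E\subset\mathcal{S}_\varepsilon$ by $$\mu_{\mathcal{S}_\varepsilon}(E)=\sup_{\tau>0}\frac{1}{\tau^{k+r-1}}m_{\mathcal{X}_d}(E^{I_\tau}),$$ is a measure on $\mathcal{S}_\varepsilon$.
   Context: Let $k,r\ge1$, $m_1,\dots,m_k,n_1,\dots,n_r$ positive integers, $m=\sum m_i$, $n=\sum n_j$, $d=m+n$, with fixed norms $\|\cdot\|$ on each $\mathbb{R}^{m_i}$, $\mathbb{R}^{n_j}$, and $\mathbb{S}^l$ the unit sphere of the norm on $\mathbb{R}^l$. $\mathcal{X}_d=SL_d(\mathbb{R})/SL_d(\mathbb{Z})$ is the space of unimodular lattices in $\mathbb{R}^d$ with invariant probability measure $m_{\mathcal{X}_d}$. For $\varepsilon>0$, $L_\varepsilon=\{(x,y)\in(\mathbb{S}^{m_1}\times\cdots\times\mathbb{S}^{m_k}\times\mathbb{S}^{n_1}\times\cdots\times\mathbb{S}^{n_{r-1}})\times\mathbb{R}^{n_r}:\|y\|^{n_r}\le\varepsilon\}\subset\mathbb{R}^d$, and $\mathcal{S}_\varepsilon$ is the set of $\Lambda\in\mathcal{X}_d$ having at least one primitive vector in $L_\varepsilon$. For $t\in\mathbb{R}^{k+r-1}$, $a_t=\mathrm{diag}\big(e^{t_1}I_{m_1},\dots,e^{t_k}I_{m_k},e^{-t_{k+1}}I_{n_1},\dots,e^{-t_{k+r-1}}I_{n_{r-1}},e^{(n_1t_{k+1}+\cdots+n_{r-1}t_{k+r-1}-m_1t_1-\cdots-m_kt_k)/n_r}I_{n_r}\big)$.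 For $I\subset\mathbb{R}^{k+r-1}$, $E^I=\{a_tx:t\in I,x\in E\}$, and $I_\tau=[0,\tau]^{k+r-1}$. *)

theory Defs
  imports "HOL-Analysis.Analysis"
begin

text \<open>Coordinates of R^d are indexed by a finite type 'n (d = CARD('n)).
  The block structure R^d = R^{m_1} x ... x R^{m_k} x R^{n_1} x ... x R^{n_r}
  is given by a map blk :: 'n => nat with values in {0..<k+r}; blocks 0..k-1
  are the m_i-blocks, blocks k..k+r-1 are the n_j-blocks (block k+r-1 is n_r).\<close>

definition block :: "('n \<Rightarrow> nat) \<Rightarrow> nat \<Rightarrow> 'n set" where
  "block blk i = {j. blk j = i}"

definition bsize :: "('n::finite \<Rightarrow> nat) \<Rightarrow> nat \<Rightarrow> nat" where
  "bsize blk i = card (block blk i)"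

definition is_block_norm :: "('n::finite \<Rightarrow> nat) \<Rightarrow> nat \<Rightarrow> (real^'n \<Rightarrow> real) \<Rightarrow> bool" where
  "is_block_norm blk i N \<longleftrightarrow>
     (\<forall>v w. (\<forall>j\<in>block blk i. v$j = w$j) \<longrightarrow> N v = N w) \<and>
     (\<forall>c v. N (c *\<^sub>R v) = \<bar>c\<bar> * N v) \<and>
     (\<forall>v w. N (v + w) \<le> N v + N w) \<and>
     (\<forall>v. N v = 0 \<longleftrightarrow> (\<forall>j\<in>block blk i. v$j = 0))"

definition Zvecs :: "(real^'n::finite) set" where
  "Zvecs = {z. \<forall>i. z$i \<in> \<int>}"

definition SLd :: "(real^'n^'n::finite) set" where
  "SLd = {g. det g = 1}"

definition lat :: "real^'n^'n::finite \<Rightarrow> (real^'n) set" where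
  "lat g = (\<lambda>z. g *v z) ` Zvecs"

definition Xd :: "(real^'n::finite) set set" where
  "Xd = lat ` SLd"

text \<open>Borel structure of X_d = SL_d(R)/SL_d(Z): quotient Borel sets.\<close>
definition Xd_sets :: "(real^'n::finite) set set set" where
  "Xd_sets = {E. E \<subseteq> Xd \<and> {g \<in> SLd. lat g \<in> E} \<in> sets borel}"

definition lat_act :: "real^'n^'n::finite \<Rightarrow> (real^'n) set \<Rightarrow> (real^'n) set" where
  "lat_act g \<Lambda> = (\<lambda>v. g *v v) ` \<Lambda>"

definition primitive :: "(real^'n::finite) set \<Rightarrow> real^'n \<Rightarrow> bool" where
  "primitive \<Lambda> v \<longleftrightarrow> v \<in> \<Lambda> \<and> v \<noteq> 0 \<and> (\<forall>c. c *\<^sub>R v \<in> \<Lambda> \<longrightarrow> c \<in> \<int>)"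

definition L_eps :: "('n::finite \<Rightarrow> nat) \<Rightarrow> nat \<Rightarrow> nat \<Rightarrow> (nat \<Rightarrow> real^'n \<Rightarrow> real)
    \<Rightarrow> real \<Rightarrow> (real^'n) set" where
  "L_eps blk k r N \<epsilon> = {v. (\<forall>i<k+r-1. N i v = 1) \<and>
      N (k+r-1) v ^ bsize blk (k+r-1) \<le> \<epsilon>}"

definition S_eps :: "('n::finite \<Rightarrow> nat) \<Rightarrow> nat \<Rightarrow> nat \<Rightarrow> (nat \<Rightarrow> real^'n \<Rightarrow> real)
    \<Rightarrow> real \<Rightarrow> (real^'n) set set" where
  "S_eps blk k r N \<epsilon> = {\<Lambda> \<in> Xd. \<exists>v. primitive \<Lambda> v \<and> v \<in> L_eps blk k r N \<epsilon>}"

text \<open>Exponent of a_t on block i; t :: nat => real, only t 0, ..., t (k+r-2) matter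
  (t i here is t_{i+1} of the paper).\<close>
definition expo :: "('n::finite \<Rightarrow> nat) \<Rightarrow> nat \<Rightarrow> nat \<Rightarrow> (nat \<Rightarrow> real) \<Rightarrow> nat \<Rightarrow> real" where
  "expo blk k r t i =
     (if i < k then t i
      else if i < k + r - 1 then - t i
      else ((\<Sum>j\<in>{k..<k+r-1}. real (bsize blk j) * t j)
            - (\<Sum>j<k. real (bsize blk j) * t j)) / real (bsize blk (k+r-1)))"

definition a_mat :: "('n::finite \<Rightarrow> nat) \<Rightarrow> nat \<Rightarrow> nat \<Rightarrow> (nat \<Rightarrow> real) \<Rightarrow> real^'n^'n" where
  "a_mat blk k r t = (\<chi> i j. if i = j then exp (expo blk k r t (blk i)) else 0)"

definition orbit_set :: "('n::finite \<Rightarrow> nat) \<Rightarrow> nat \<Rightarrow> nat \<Rightarrow> (nat \<Rightarrow> real) set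
    \<Rightarrow> (real^'n) set set \<Rightarrow> (real^'n) set set" where
  "orbit_set blk k r I E = {lat_act (a_mat blk k r t) \<Lambda> | t \<Lambda>. t \<in> I \<and> \<Lambda> \<in> E}"

definition Icube :: "nat \<Rightarrow> nat \<Rightarrow> real \<Rightarrow> (nat \<Rightarrow> real) set" where
  "Icube k r \<tau> = {t. \<forall>i<k+r-1. 0 \<le> t i \<and> t i \<le> \<tau>}"

definition mu_S :: "(real^'n::finite) set measure \<Rightarrow> ('n \<Rightarrow> nat) \<Rightarrow> nat \<Rightarrow> nat
    \<Rightarrow> (real^'n) set set \<Rightarrow> ennreal" where
  "mu_S m blk k r E = (SUP \<tau>\<in>{0<..}. ennreal (1 / \<tau> ^ (k+r-1)) *
       emeasure m (orbit_set blk k r (Icube k r \<tau>) E))"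

end

(*
  For E in the cross-section S_eps put f_E(s) = m(E^{I_s}). The cube I_{js} is covered by j^D
  translates of I_s, and m is invariant under the flow, so f_E(js) <= j^D f_E(s); hence the
  supremum defining mu may be taken along the scales s_n = 1/(n+1)!, along which
  s_n^{-D} f_E(s_n) increases. Each E |-> s_n^{-D} f_E(s_n) is countably subadditive, and it is
  additive on subsets of W_j, the lattices of S_eps that do not return to S_eps within time
  1/(j+1) (their small orbit pieces are disjoint), as soon as n >= j. Because L_eps is bounded and
  a return time is read off from the norms of a lattice vector, every lattice of S_eps has only
  finitely many return times in a bounded window, so the W_j exhaust S_eps; countable
  additivity of mu follows. The orbit sets E^I are measurable since they are countable unions,
  over the vectors of Z^d, of measurable sets of matrices.
*)

theory Submission
  imports Defs
begin

section \<open>Measures defined as suprema of rescaled image measures\<close>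

lemma countably_additive_SUP:
  fixes g :: "nat \<Rightarrow> 'a set \<Rightarrow> ennreal" and W :: "nat \<Rightarrow> 'a set"
  assumes A: "sigma_algebra \<Omega> A"
    and g_mono: "\<And>n E E'. E \<subseteq> E' \<Longrightarrow> E' \<in> A \<Longrightarrow> g n E \<le> g n E'"
    and g_subadditive: "\<And>n F. range F \<subseteq> A \<Longrightarrow> g n (\<Union>i. F i) \<le> (\<Sum>i. g n (F i))"
    and g_incseq: "\<And>E. E \<in> A \<Longrightarrow> incseq (\<lambda>n. g n E)"
    and W: "incseq W" "range W \<subseteq> A"
    and g_exhaust: "\<And>n E. E \<in> A \<Longrightarrow> g n E = (SUP j. g n (E \<inter> W j))"
    and g_additive: "\<And>j n F. j \<le> n \<Longrightarrow> range F \<subseteq> A \<Longrightarrow> disjoint_family F \<Longrightarrow> (\<And>i. F i \<subseteq> W j) \<Longrightarrow>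
        (\<Sum>i. g n (F i)) = g n (\<Union>i. F i)"
  shows "countably_additive A (\<lambda>E. SUP n. g n E)"
proof (rule countably_additiveI)
  interpret sigma_algebra \<Omega> A by (fact A)
  define \<mu> where "\<mu> E = (SUP n. g n E)" for E
  have W_A: "E \<inter> W j \<in> A" if "E \<in> A" for E j
    using W(2) that by blast
  have \<mu>_mono: "\<mu> E \<le> \<mu> E'" if "E \<subseteq> E'" "E' \<in> A" for E E'
    unfolding \<mu>_def by (intro SUP_mono) (use g_mono that in blast)
  have \<mu>_exhaust: "\<mu> E = (SUP j. \<mu> (E \<inter> W j))" if "E \<in> A" for E
  proof -
    have "\<mu> E = (SUP n. SUP j. g n (E \<inter> W j))"
      unfolding \<mu>_def using g_exhaust[OF that] by simp
    also have "\<dots> = (SUP j. \<mu> (E \<inter> W j))"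
      unfolding \<mu>_def by (rule SUP_commute)
    finally show ?thesis .
  qed
  fix F :: "nat \<Rightarrow> 'a set"
  assume F: "range F \<subseteq> A" "disjoint_family F" "(\<Union>i. F i) \<in> A"
  show "(\<Sum>i. \<mu> (F i)) = \<mu> (\<Union>i. F i)"
  proof (rule antisym)
    have "(\<Sum>i. \<mu> (F i)) = (\<Sum>i. SUP j. \<mu> (F i \<inter> W j))"
      using F(1) by (intro suminf_cong \<mu>_exhaust) auto
    also have "\<dots> = (SUP j. \<Sum>i. \<mu> (F i \<inter> W j))"
      using F(1) W(1) by (intro ennreal_suminf_SUP_eq) (auto simp: incseq_def intro!: \<mu>_mono W_A)
    also have "\<dots> \<le> \<mu> (\<Union>i. F i)"
    proof (rule SUP_least)
      fix j
      have inc: "incseq (\<lambda>n. g n (F i \<inter> W j))" for i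
        using F(1) by (intro g_incseq W_A) auto
      have "(\<Sum>i. \<mu> (F i \<inter> W j)) = (SUP n. \<Sum>i. g n (F i \<inter> W j))"
        unfolding \<mu>_def by (rule ennreal_suminf_SUP_eq[OF inc])
      also have "\<dots> \<le> \<mu> (\<Union>i. F i)"
      proof (rule SUP_least)
        fix n
        \<comment> \<open>passing from \<open>n\<close> to \<open>n + j \<ge> j\<close> makes \<open>g\<close> additive on the pieces\<close>
        have "(\<Sum>i. g n (F i \<inter> W j)) \<le> (\<Sum>i. g (n + j) (F i \<inter> W j))"
          by (intro suminf_le incseqD[OF inc]) auto
        also have "\<dots> = g (n + j) (\<Union>i. F i \<inter> W j)"
          using F(1,2) by (intro g_additive[of j]) (auto intro: W_A simp: disjoint_family_on_def)
        also have "\<dots> \<le> g (n + j) (\<Union>i. F i)"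
          using F(3) by (intro g_mono) auto
        also have "\<dots> \<le> \<mu> (\<Union>i. F i)"
          unfolding \<mu>_def by (rule SUP_upper) simp
        finally show "(\<Sum>i. g n (F i \<inter> W j)) \<le> \<mu> (\<Union>i. F i)" .
      qed
      finally show "(\<Sum>i. \<mu> (F i \<inter> W j)) \<le> \<mu> (\<Union>i. F i)" .
    qed
    finally show "(\<Sum>i. \<mu> (F i)) \<le> \<mu> (\<Union>i. F i)" .
  next
    have "g n (\<Union>i. F i) \<le> (\<Sum>i. \<mu> (F i))" for n
      using g_subadditive[OF F(1)] by (rule order_trans) (auto simp: \<mu>_def intro!: suminf_le SUP_upper)
    then show "\<mu> (\<Union>i. F i) \<le> (\<Sum>i. \<mu> (F i))"
      unfolding \<mu>_def by (rule SUP_least)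
  qed
qed

lemma measure_space_SUP_emeasure_images:
  fixes M :: "'b measure" and T :: "nat \<Rightarrow> 'a set \<Rightarrow> 'b set"
    and c :: "nat \<Rightarrow> ennreal" and W :: "nat \<Rightarrow> 'a set"
  assumes A: "sigma_algebra \<Omega> A"
    and T_sets: "\<And>n E. E \<in> A \<Longrightarrow> T n E \<in> sets M"
    and T_Union: "\<And>n F. T n (\<Union>F) = \<Union>(T n ` F)"
    and incseq: "\<And>E. E \<in> A \<Longrightarrow> incseq (\<lambda>n. c n * emeasure M (T n E))"
    and W: "incseq W" "range W \<subseteq> A" "(\<Union>j. W j) = \<Omega>"
    and T_disjoint: "\<And>j n E E'. j \<le> n \<Longrightarrow> E \<subseteq> W j \<Longrightarrow> E' \<subseteq> W j \<Longrightarrow> E \<inter> E' = {} \<Longrightarrow>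
        T n E \<inter> T n E' = {}"
  shows "measure_space \<Omega> A (\<lambda>E. SUP n. c n * emeasure M (T n E))"
proof -
  interpret sigma_algebra \<Omega> A by (fact A)
  have T_mono: "T n E \<subseteq> T n E'" if "E \<subseteq> E'" for n E E'
    using T_Union[of n "{E, E'}"] that by (simp add: sup.absorb2) blast
  have T_UN: "T n (\<Union>i. F i) = (\<Union>i. T n (F i))" for n and F :: "nat \<Rightarrow> 'a set"
    using T_Union[of n "range F"] by (simp add: image_image)
  have "countably_additive A (\<lambda>E. SUP n. c n * emeasure M (T n E))"
  proof (rule countably_additive_SUP[OF A _ _ incseq W(1,2)])
    show "c n * emeasure M (T n E) \<le> c n * emeasure M (T n E')" if "E \<subseteq> E'" "E' \<in> A" for n E E'
      by (intro mult_left_mono emeasure_mono T_mono T_sets that) simp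
    show "c n * emeasure M (T n (\<Union>i. F i)) \<le> (\<Sum>i. c n * emeasure M (T n (F i)))"
      if "range F \<subseteq> A" for n F
      unfolding T_UN ennreal_suminf_cmult using that
      by (intro mult_left_mono emeasure_subadditive_countably) (auto intro!: T_sets)
    show "c n * emeasure M (T n E) = (SUP j. c n * emeasure M (T n (E \<inter> W j)))" if E: "E \<in> A" for n E
    proof -
      have "(SUP j. emeasure M (T n (E \<inter> W j))) = emeasure M (\<Union>j. T n (E \<inter> W j))"
        using E W(1,2) by (intro SUP_emeasure_incseq)
          (auto intro!: T_sets T_mono simp: incseq_def le_fun_def)
      also have "(\<Union>j. T n (E \<inter> W j)) = T n E"
        using W(3) sets_into_space[OF E] by (simp flip: T_UN Int_UN_distrib add: Int_absorb2)
      finally show ?thesis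
        by (simp add: SUP_mult_left_ennreal[symmetric])
    qed
    show "(\<Sum>i. c n * emeasure M (T n (F i))) = c n * emeasure M (T n (\<Union>i. F i))"
      if "j \<le> n" "range F \<subseteq> A" "disjoint_family F" "\<And>i. F i \<subseteq> W j" for j n F
    proof -
      have "disjoint_family (\<lambda>i. T n (F i))"
        unfolding disjoint_family_on_def
      proof (intro ballI impI)
        fix i i' :: nat assume "i \<noteq> i'"
        then show "T n (F i) \<inter> T n (F i') = {}"
          using that by (intro T_disjoint[of j]) (auto simp: disjoint_family_on_def)
      qed
      then show ?thesis
        using that(2) by (simp add: T_UN suminf_emeasure T_sets image_subset_iff)
    qed
  qed
  moreover have "positive A (\<lambda>E. SUP n. c n * emeasure M (T n E))"
    using T_Union[of _ "{}"] by (simp add: positive_def)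
  ultimately show ?thesis
    using A by (simp add: measure_space_def)
qed

lemma measure_space_cong:
  assumes "measure_space \<Omega> A \<mu>" "\<And>E. E \<in> A \<Longrightarrow> \<mu>' E = \<mu> E"
  shows "measure_space \<Omega> A \<mu>'"
proof -
  interpret sigma_algebra \<Omega> A
    using assms(1) by (simp add: measure_space_def)
  show ?thesis
    using assms positive_cong_eq[of \<mu>' \<mu>] countably_additive_eq[of \<mu>' \<mu>]
    by (simp add: measure_space_def)
qed

lemma sigma_algebra_subsets:
  assumes "S \<in> sets M"
  shows "sigma_algebra S {E \<in> sets M. E \<subseteq> S}"
proof -
  have "{E \<in> sets M. E \<subseteq> S} = (\<inter>) S ` sets M"
    using assms by (auto intro!: image_eqI[of _ _ E for E])
  then show ?thesis
    using sets.restricted_sigma_algebra[OF assms] by simp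
qed

lemma rescaled_le_multiple:
  fixes f :: "real \<Rightarrow> ennreal"
  assumes f_multiple: "f (real j * y) \<le> of_nat (j ^ D) * f y" and y: "0 < y" and x: "0 < x"
  shows "ennreal (1 / x ^ D) * f (real j * y) \<le> ennreal ((real j * y / x) ^ D) * (ennreal (1 / y ^ D) * f y)"
proof -
  have "ennreal (1 / x ^ D) * f (real j * y) \<le> ennreal (1 / x ^ D) * (of_nat (j ^ D) * f y)"
    by (intro mult_left_mono f_multiple) simp
  also have "\<dots> = ennreal (1 / x ^ D * real j ^ D) * f y"
    using x by (subst ennreal_mult) (auto simp: ennreal_of_nat_eq_real_of_nat mult.assoc)
  also have "1 / x ^ D * real j ^ D = (real j * y / x) ^ D * (1 / y ^ D)"
    using x y by (simp add: power_mult_distrib power_divide)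
  also have "ennreal \<dots> * f y = ennreal ((real j * y / x) ^ D) * (ennreal (1 / y ^ D) * f y)"
    using x y by (subst ennreal_mult) (auto simp: mult.assoc)
  finally show ?thesis .
qed

lemma incseq_rescaled:
  fixes f :: "real \<Rightarrow> ennreal" and s :: "nat \<Rightarrow> real" and q :: "nat \<Rightarrow> nat"
  assumes f_multiple: "\<And>x j. 0 < x \<Longrightarrow> 1 \<le> j \<Longrightarrow> f (real j * x) \<le> of_nat (j ^ D) * f x"
    and s_pos: "\<And>n. 0 < s n" and s_Suc: "\<And>n. s n = real (q n) * s (Suc n)" and q: "\<And>n. 1 \<le> q n"
  shows "incseq (\<lambda>n. ennreal (1 / s n ^ D) * f (s n))"
proof (rule incseq_SucI)
  fix n
  have "ennreal (1 / s n ^ D) * f (real (q n) * s (Suc n)) \<le>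
      ennreal ((real (q n) * s (Suc n) / s n) ^ D) * (ennreal (1 / s (Suc n) ^ D) * f (s (Suc n)))"
    by (intro rescaled_le_multiple f_multiple q s_pos)
  then show "ennreal (1 / s n ^ D) * f (s n) \<le> ennreal (1 / s (Suc n) ^ D) * f (s (Suc n))"
    using s_pos[of n] by (simp flip: s_Suc)
qed

lemma SUP_rescaled_eq_SUP_sequence:
  fixes f :: "real \<Rightarrow> ennreal" and s :: "nat \<Rightarrow> real"
  assumes f_mono: "\<And>x y. 0 < x \<Longrightarrow> x \<le> y \<Longrightarrow> f x \<le> f y"
    and f_multiple: "\<And>x j. 0 < x \<Longrightarrow> 1 \<le> j \<Longrightarrow> f (real j * x) \<le> of_nat (j ^ D) * f x"
    and s_pos: "\<And>n. 0 < s n" and s_lim: "s \<longlonglongrightarrow> 0"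
  shows "(SUP x\<in>{0<..}. ennreal (1 / x ^ D) * f x) = (SUP n. ennreal (1 / s n ^ D) * f (s n))"
    (is "?L = ?R")
proof (rule antisym)
  show "?L \<le> ?R"
  proof (rule SUP_least)
    fix x :: real assume "x \<in> {0<..}"
    then have x: "0 < x" by simp
    \<comment> \<open>cover \<open>[0, x]\<close> by \<open>\<lceil>x / s n\<rceil>\<close> intervals of length \<open>s n\<close> and let \<open>n \<rightarrow> \<infinity>\<close>\<close>
    have bound: "ennreal (1 / x ^ D) * f x \<le> ennreal ((1 + s n / x) ^ D) * ?R" for n
    proof -
      define j where "j = nat \<lceil>x / s n\<rceil>"
      have "0 < x / s n"
        using x s_pos[of n] by simp
      then have j: "1 \<le> j" "x / s n \<le> real j" "real j < x / s n + 1"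
        unfolding j_def by linarith+
      have "x \<le> real j * s n" "real j * s n / x \<le> 1 + s n / x"
        using j(2,3) x s_pos[of n] by (simp_all add: field_simps)
      then have "ennreal (1 / x ^ D) * f x \<le> ennreal (1 / x ^ D) * f (real j * s n)"
        using x by (intro mult_left_mono f_mono) auto
      also have "\<dots> \<le> ennreal ((real j * s n / x) ^ D) * (ennreal (1 / s n ^ D) * f (s n))"
        by (intro rescaled_le_multiple f_multiple j s_pos x)
      also have "\<dots> \<le> ennreal ((1 + s n / x) ^ D) * ?R"
        using \<open>real j * s n / x \<le> 1 + s n / x\<close> x s_pos[of n]
        by (intro mult_mono ennreal_leI power_mono SUP_upper) auto
      finally show ?thesis .
    qed
    have "(\<lambda>n. ennreal ((1 + s n / x) ^ D) * ?R) \<longlonglongrightarrow> ennreal ((1 + 0 / x) ^ D) * ?R"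
      using x by (intro tendsto_mult_ennreal tendsto_ennrealI tendsto_intros s_lim) auto
    then show "ennreal (1 / x ^ D) * f x \<le> ?R"
      using bound by (intro LIMSEQ_le_const) auto
  qed
next
  show "?R \<le> ?L"
  proof (rule SUP_least)
    fix n
    show "ennreal (1 / s n ^ D) * f (s n) \<le> ?L"
      using s_pos[of n] by (intro SUP_upper2[of "s n"]) auto
  qed
qed

text \<open>Consecutive ratios of the scales are integers, as needed for \<open>incseq_rescaled\<close>.\<close>

definition fact_scale :: "nat \<Rightarrow> real" where
  "fact_scale n = 1 / fact (Suc n)"

lemma fact_scale_pos: "0 < fact_scale n"
  by (simp add: fact_scale_def)

lemma fact_scale_Suc: "fact_scale n = real (Suc (Suc n)) * fact_scale (Suc n)"
  by (simp add: fact_scale_def field_simps del: fact_Suc) (simp add: fact_Suc[of "Suc n"] algebra_simps)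

lemma fact_scale_le:
  assumes "j \<le> n"
  shows "fact_scale n \<le> 1 / real (Suc j)"
proof -
  have "real (Suc n) \<le> fact (Suc n)"
    by (metis fact_ge_self of_nat_fact of_nat_le_iff)
  moreover have "real (Suc j) \<le> real (Suc n)"
    using assms by simp
  ultimately have "real (Suc j) \<le> fact (Suc n)"
    by linarith
  then show ?thesis
    by (simp add: fact_scale_def frac_le del: fact_Suc)
qed

lemma LIMSEQ_fact_scale: "fact_scale \<longlonglongrightarrow> 0"
proof (rule Lim_null_comparison[OF _ LIMSEQ_inverse_real_of_nat])
  show "\<forall>\<^sub>F n in sequentially. norm (fact_scale n) \<le> inverse (real (Suc n))"
    using fact_scale_pos fact_scale_le by (simp add: inverse_eq_divide less_imp_le)
qed

section \<open>The diagonal flow\<close>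

lemma expo_add: "expo blk k r (\<lambda>i. s i + t i) i = expo blk k r s i + expo blk k r t i"
  by (simp add: expo_def sum.distrib algebra_simps add_divide_distrib diff_divide_distrib)

lemma expo_cong:
  assumes "r \<ge> 1" "\<forall>j<k+r-1. s j = t j"
  shows "expo blk k r s i = expo blk k r t i"
proof -
  have "(\<Sum>j\<in>{k..<k+r-1}. real (bsize blk j) * s j) = (\<Sum>j\<in>{k..<k+r-1}. real (bsize blk j) * t j)"
       "(\<Sum>j<k. real (bsize blk j) * s j) = (\<Sum>j<k. real (bsize blk j) * t j)"
    using assms by (auto intro!: sum.cong)
  then show ?thesis
    using assms by (auto simp: expo_def)
qed

lemma abs_expo_le:
  assumes r: "r \<ge> 1" and last_block: "bsize blk (k+r-1) > 0" and u: "\<forall>j<k+r-1. \<bar>u j\<bar> \<le> 1"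
  shows "\<bar>expo blk k r u i\<bar> \<le> 1 + (\<Sum>j<k+r-1. real (bsize blk j)) / real (bsize blk (k+r-1))"
proof -
  let ?b = "\<lambda>j. real (bsize blk j)"
  have bound_nonneg: "0 \<le> (\<Sum>j<k+r-1. ?b j) / ?b (k+r-1)"
    by (intro divide_nonneg_nonneg sum_nonneg) auto
  show ?thesis
  proof (cases "i < k + r - 1")
    case True
    then have "\<bar>expo blk k r u i\<bar> \<le> 1"
      using u by (auto simp: expo_def)
    then show ?thesis
      using bound_nonneg by linarith
  next
    case False
    have "\<bar>(\<Sum>j\<in>{k..<k+r-1}. ?b j * u j) - (\<Sum>j<k. ?b j * u j)\<bar>
        \<le> (\<Sum>j\<in>{k..<k+r-1}. \<bar>?b j * u j\<bar>) + (\<Sum>j<k. \<bar>?b j * u j\<bar>)"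
      by (rule order_trans[OF abs_triangle_ineq4 add_mono[OF sum_abs sum_abs]])
    also have "\<dots> \<le> (\<Sum>j\<in>{k..<k+r-1}. ?b j) + (\<Sum>j<k. ?b j)"
      using u r by (intro add_mono sum_mono) (auto simp: abs_mult intro!: mult_left_le)
    also have "\<dots> = (\<Sum>j<k+r-1. ?b j)"
      using r sum.atLeastLessThan_concat[of 0 k "k+r-1" ?b] by (simp add: atLeast0LessThan add.commute)
    moreover have "expo blk k r u i
        = ((\<Sum>j\<in>{k..<k+r-1}. ?b j * u j) - (\<Sum>j<k. ?b j * u j)) / ?b (k+r-1)"
      using False r by (auto simp: expo_def)
    ultimately have "\<bar>expo blk k r u i\<bar> \<le> (\<Sum>j<k+r-1. ?b j) / ?b (k+r-1)"
      using last_block by (simp add: abs_divide divide_right_mono)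
    then show ?thesis
      by linarith
  qed
qed

lemma a_mat_mult: "a_mat blk k r s ** a_mat blk k r t = a_mat blk k r (\<lambda>i. s i + t i)"
  by (simp add: a_mat_def matrix_matrix_mult_def vec_eq_iff if_distrib[of "\<lambda>x. x * _"]
      expo_add exp_add cong: if_cong)

lemma a_mat_zero: "a_mat blk k r (\<lambda>_. 0) = mat 1"
  by (simp add: a_mat_def expo_def mat_def vec_eq_iff)

lemma a_mat_mult_vector: "a_mat blk k r t *v v = (\<chi> j. exp (expo blk k r t (blk j)) * v$j)"
  by (simp add: a_mat_def matrix_vector_mult_def vec_eq_iff if_distrib[of "\<lambda>x. x * _"] cong: if_cong)

lemma a_mat_mult_nth: "(a_mat blk k r s ** g) $ i $ j = exp (expo blk k r s (blk i)) * g $ i $ j"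
  by (simp add: a_mat_def matrix_matrix_mult_def if_distrib[of "\<lambda>x. x * _"] cong: if_cong)

lemma sum_UNIV_blocks:
  assumes "\<forall>j. blk j < K"
  shows "(\<Sum>j\<in>UNIV. f (blk j)) = (\<Sum>i<K. real (bsize blk i) * f i)"
proof -
  have "(\<Sum>j\<in>UNIV. f (blk j)) = (\<Sum>i<K. \<Sum>j\<in>{x\<in>UNIV. blk x = i}. f (blk j))"
    using assms by (intro sum.group[symmetric]) auto
  also have "\<dots> = (\<Sum>i<K. real (bsize blk i) * f i)"
    by (intro sum.cong) (auto simp: bsize_def block_def)
  finally show ?thesis .
qed

lemma weighted_sum_expo_eq_0:
  assumes "r \<ge> 1" "bsize blk (k+r-1) \<noteq> 0"
  shows "(\<Sum>i<k+r. real (bsize blk i) * expo blk k r t i) = 0"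
proof -
  let ?b = "\<lambda>i. real (bsize blk i)"
  have split: "{..<k+r} = {..<k} \<union> {k..<k+r-1} \<union> {k+r-1}"
    using assms by auto
  have "(\<Sum>i<k+r. ?b i * expo blk k r t i) = (\<Sum>i<k. ?b i * expo blk k r t i)
      + (\<Sum>i\<in>{k..<k+r-1}. ?b i * expo blk k r t i) + ?b (k+r-1) * expo blk k r t (k+r-1)"
    unfolding split using assms(1) by (subst sum.union_disjoint; auto intro!: sum.union_disjoint)
  also have "(\<Sum>i<k. ?b i * expo blk k r t i) = (\<Sum>i<k. ?b i * t i)"
    by (intro sum.cong) (auto simp: expo_def)
  also have "(\<Sum>i\<in>{k..<k+r-1}. ?b i * expo blk k r t i) = - (\<Sum>i\<in>{k..<k+r-1}. ?b i * t i)"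
    by (subst sum_negf[symmetric], intro sum.cong) (auto simp: expo_def)
  also have "?b (k+r-1) * expo blk k r t (k+r-1) = (\<Sum>i\<in>{k..<k+r-1}. ?b i * t i) - (\<Sum>i<k. ?b i * t i)"
    using assms by (simp add: expo_def)
  finally show ?thesis
    by simp
qed

lemma det_a_mat:
  assumes "r \<ge> 1" "bsize blk (k+r-1) \<noteq> 0" "\<forall>j. blk j < k + r"
  shows "det (a_mat blk k r t) = 1"
proof -
  have "det (a_mat blk k r t) = (\<Prod>i\<in>UNIV. exp (expo blk k r t (blk i)))"
    by (subst det_diagonal) (auto simp: a_mat_def)
  also have "\<dots> = exp (\<Sum>i\<in>UNIV. expo blk k r t (blk i))"
    by (simp add: exp_sum)
  also have "(\<Sum>i\<in>UNIV. expo blk k r t (blk i)) = 0"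
    using sum_UNIV_blocks[OF assms(3)] weighted_sum_expo_eq_0[OF assms(1,2)] by simp
  finally show ?thesis
    by simp
qed

lemma orbit_setI: "t \<in> I \<Longrightarrow> Y \<in> E \<Longrightarrow> lat_act (a_mat blk k r t) Y \<in> orbit_set blk k r I E"
  unfolding orbit_set_def by blast

lemma orbit_setE:
  assumes "X \<in> orbit_set blk k r I E"
  obtains t Y where "t \<in> I" "Y \<in> E" "X = lat_act (a_mat blk k r t) Y"
  using assms unfolding orbit_set_def by blast

lemma orbit_set_Union: "orbit_set blk k r I (\<Union>F) = \<Union>(orbit_set blk k r I ` F)"
  unfolding orbit_set_def by blast

lemma orbit_set_UN_times: "orbit_set blk k r (\<Union>p\<in>P. I p) E = (\<Union>p\<in>P. orbit_set blk k r (I p) E)"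
  unfolding orbit_set_def by blast

lemma orbit_set_mono: "I \<subseteq> I' \<Longrightarrow> orbit_set blk k r I E \<subseteq> orbit_set blk k r I' E"
  unfolding orbit_set_def by blast

section \<open>Block norms\<close>

locale block_norm =
  fixes blk :: "'n::finite \<Rightarrow> nat" and i :: nat and N :: "real^'n \<Rightarrow> real"
  assumes is_block_norm: "is_block_norm blk i N"
begin

lemma scaleR: "N (c *\<^sub>R v) = \<bar>c\<bar> * N v"
  using is_block_norm by (simp add: is_block_norm_def)

lemma triangle: "N (v + w) \<le> N v + N w"
  using is_block_norm by (simp add: is_block_norm_def)

lemma eq_0_iff: "N v = 0 \<longleftrightarrow> (\<forall>j\<in>block blk i. v$j = 0)"
  using is_block_norm by (simp add: is_block_norm_def)

lemma block_cong: "(\<forall>j\<in>block blk i. v$j = w$j) \<Longrightarrow> N v = N w"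
  using is_block_norm by (simp add: is_block_norm_def)

lemma nonneg: "0 \<le> N v"
  using triangle[of v "-v"] scaleR[of "-1" v] scaleR[of 0 0] by simp

lemma convex_on: "convex_on UNIV N"
proof (rule convex_onI)
  fix t :: real and x y assume "0 < t" "t < 1"
  then show "N ((1 - t) *\<^sub>R x + t *\<^sub>R y) \<le> (1 - t) * N x + t * N y"
    using triangle[of "(1 - t) *\<^sub>R x" "t *\<^sub>R y"] by (simp add: scaleR)
qed simp

lemma continuous_on: "continuous_on UNIV N"
  by (intro convex_on_continuous convex_on) simp

lemma borel_measurable: "N \<in> borel_measurable borel"
  by (rule borel_measurable_continuous_onI[OF continuous_on])

text \<open>By compactness of the unit sphere of the block, \<open>N\<close> dominates each coordinate of the block.\<close>

lemma component_le:
  assumes "block blk i \<noteq> {}"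
  obtains c where "c > 0" "\<And>v l. l \<in> block blk i \<Longrightarrow> c * \<bar>v$l\<bar> \<le> N v"
proof -
  define K where "K = {v::real^'n. (\<forall>l. l \<notin> block blk i \<longrightarrow> v$l = 0) \<and> norm v = 1}"
  have "closed K"
    unfolding K_def
    by (intro closed_Collect_conj closed_Collect_all closed_Collect_imp closed_Collect_eq)
       (auto intro!: continuous_intros)
  moreover have "bounded K"
    unfolding K_def by (auto simp: bounded_iff)
  ultimately have "compact K"
    by (simp add: compact_eq_bounded_closed)
  moreover obtain l0 where l0: "l0 \<in> block blk i"
    using assms by auto
  then have "axis l0 1 \<in> K"
    using norm_axis_1[of l0] by (auto simp: K_def axis_def simp del: norm_axis_1)
  ultimately obtain v0 where v0: "v0 \<in> K" "\<And>y. y \<in> K \<Longrightarrow> N v0 \<le> N y"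
    using continuous_attains_inf[of K N] continuous_on_subset[OF continuous_on] by blast
  have "v0 \<noteq> 0"
    using v0(1) by (auto simp: K_def)
  with v0(1) have "N v0 \<noteq> 0"
    by (auto simp: eq_0_iff K_def vec_eq_iff)
  then have c0: "N v0 > 0"
    using nonneg[of v0] by simp
  show thesis
  proof (rule that[OF c0])
    fix v :: "real^'n" and l assume l: "l \<in> block blk i"
    define p where "p = (\<chi> j. if j \<in> block blk i then v$j else 0)"
    have Np: "N p = N v"
      by (rule block_cong) (simp add: p_def)
    have pl: "p$l = v$l"
      using l by (simp add: p_def)
    show "N v0 * \<bar>v$l\<bar> \<le> N v"
    proof (cases "p = 0")
      case True
      then show ?thesis
        using pl nonneg[of v] by simp
    next
      case False
      then have np: "norm p > 0"
        by simp
      have "(1 / norm p) *\<^sub>R p \<in> K"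
        using np by (auto simp: K_def p_def)
      then have "N v0 \<le> N ((1 / norm p) *\<^sub>R p)"
        by (rule v0(2))
      then have "N v0 \<le> N p / norm p"
        by (simp add: scaleR)
      then have "N v0 * norm p \<le> N p"
        using np by (simp add: field_simps)
      moreover have "N v0 * \<bar>v$l\<bar> \<le> N v0 * norm p"
        using component_le_norm_cart[of p l] pl c0 by (intro mult_left_mono) auto
      ultimately show ?thesis
        using Np by simp
    qed
  qed
qed

end

section \<open>Lattices\<close>

lemma countable_Zvecs: "countable (Zvecs :: (real^'n::finite) set)"
proof -
  have "Zvecs \<subseteq> range (\<lambda>f::'n \<Rightarrow> int. \<chi> i. of_int (f i))"
  proof
    fix z :: "real^'n" assume "z \<in> Zvecs"
    then have "(\<chi> i. of_int \<lfloor>z$i\<rfloor>) = z"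
      by (simp add: Zvecs_def vec_eq_iff)
    then show "z \<in> range (\<lambda>f::'n \<Rightarrow> int. \<chi> i. of_int (f i))"
      by (metis rangeI)
  qed
  then show ?thesis
    by (rule countable_subset) simp
qed

lemma finite_Zvecs_box: "finite {z \<in> (Zvecs :: (real^'n::finite) set). \<forall>l. \<bar>z$l\<bar> \<le> B}"
proof (rule finite_subset)
  show "{z \<in> Zvecs. \<forall>l. \<bar>z$l\<bar> \<le> B} \<subseteq> (\<lambda>f. \<chi> l. f l) ` (\<Pi>\<^sub>E l\<in>UNIV. {x \<in> \<int>. \<bar>x\<bar> \<le> B})"
    by (auto simp: Zvecs_def intro!: image_eqI[where x="\<lambda>l. _ $ l"])
  show "finite ((\<lambda>f. \<chi> l. f l) ` (\<Pi>\<^sub>E l\<in>(UNIV::'n set). {x::real \<in> \<int>. \<bar>x\<bar> \<le> B}))"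
    by (intro finite_imageI finite_PiE finite_abs_int_segment) auto
qed

lemma finite_Zvecs_norm_le:
  fixes g :: "real^'n::finite^'n"
  assumes "invertible g"
  shows "finite {z \<in> Zvecs. norm (g *v z) \<le> R}"
proof -
  obtain h where h: "h ** g = mat 1"
    using assms by (auto simp: invertible_def)
  obtain K where K: "K > 0" "\<And>x. norm (h *v x) \<le> norm x * K"
    using bounded_linear.pos_bounded[OF matrix_vector_mul_bounded_linear] by blast
  have "\<bar>z$l\<bar> \<le> R * K" if "norm (g *v z) \<le> R" for z :: "real^'n" and l
  proof -
    have "\<bar>z$l\<bar> \<le> norm (h *v (g *v z))"
      using component_le_norm_cart[of z l] h by (simp add: matrix_vector_mul_assoc)
    also have "\<dots> \<le> R * K"
      using K(2)[of "g *v z"] mult_right_mono[OF that less_imp_le[OF K(1)]] by linarith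
    finally show ?thesis .
  qed
  then show ?thesis
    by (intro finite_subset[OF _ finite_Zvecs_box[of "R * K"]]) auto
qed

lemma lat_act_lat: "lat_act g (lat h) = lat (g ** h)"
  by (auto simp: lat_act_def lat_def image_image matrix_vector_mul_assoc)

lemma lat_act_lat_act: "lat_act g (lat_act h L) = lat_act (g ** h) L"
  by (auto simp: lat_act_def image_image matrix_vector_mul_assoc)

lemma lat_act_mat_1: "lat_act (mat 1) L = L"
  by (auto simp: lat_act_def)

lemma SLd_mult: "g \<in> SLd \<Longrightarrow> h \<in> SLd \<Longrightarrow> g ** h \<in> SLd"
  by (simp add: SLd_def det_mul)

lemma SLd_invertible: "g \<in> SLd \<Longrightarrow> invertible g"
  by (simp add: SLd_def invertible_det_nz)

lemma SLd_mult_vector_eq_iff: "(g::real^'n::finite^'n) \<in> SLd \<Longrightarrow> g *v x = g *v y \<longleftrightarrow> x = y"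
  by (metis SLd_invertible invertible_left_inverse matrix_vector_mul_assoc matrix_vector_mul_lid)

lemma primitive_lat_iff:
  assumes g: "g \<in> SLd" and z: "z \<in> Zvecs"
  shows "primitive (lat g) (g *v z) \<longleftrightarrow> z \<noteq> 0 \<and> (\<forall>c. c *\<^sub>R z \<in> Zvecs \<longrightarrow> c \<in> \<int>)"
proof -
  have "c *\<^sub>R (g *v z) \<in> lat g \<longleftrightarrow> c *\<^sub>R z \<in> Zvecs" for c
  proof -
    have "c *\<^sub>R (g *v z) = g *v (c *\<^sub>R z)"
      by (simp add: vec_eq_iff matrix_vector_mult_def sum_distrib_left algebra_simps)
    then show ?thesis
      using SLd_mult_vector_eq_iff[OF g] by (auto simp: lat_def)
  qed
  moreover have "g *v z \<noteq> 0 \<longleftrightarrow> z \<noteq> 0"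
    using SLd_mult_vector_eq_iff[OF g, of z 0] by simp
  moreover have "g *v z \<in> lat g"
    using z by (auto simp: lat_def)
  ultimately show ?thesis
    by (auto simp: primitive_def)
qed

lemma borel_measurable_vec:
  fixes f :: "'a \<Rightarrow> 'b::euclidean_space^'n::finite"
  assumes "\<And>i. (\<lambda>x. f x $ i) \<in> borel_measurable M"
  shows "f \<in> borel_measurable M"
  by (subst borel_measurable_euclidean_space)
     (auto simp: Basis_vec_def inner_axis intro!: borel_measurable_inner assms)

lemma borel_measurable_vec_nth[measurable]:
  "(\<lambda>x::'a::topological_space^'n::finite. x $ i) \<in> borel_measurable borel"
  by (rule borel_measurable_continuous_onI) (intro continuous_intros)

lemma borel_measurable_mult_vector[measurable]:
  "(\<lambda>g::real^'n::finite^'n. g *v z) \<in> borel_measurable borel"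
  by (intro borel_measurable_vec) (simp add: matrix_vector_mult_def)

lemma borel_measurable_det[measurable]: "(\<lambda>g::real^'n::finite^'n. det g) \<in> borel_measurable borel"
  unfolding det_def by measurable

lemma sets_SLd: "(SLd :: (real^'n::finite^'n) set) \<in> sets borel"
proof -
  have "SLd = {g::real^'n^'n \<in> space borel. det g = 1}"
    by (simp add: SLd_def)
  also have "\<dots> \<in> sets borel"
    by measurable
  finally show ?thesis .
qed

section \<open>The cross-section\<close>

locale cross_section =
  fixes blk :: "'n::finite \<Rightarrow> nat" and k r :: nat
    and N :: "nat \<Rightarrow> real^'n \<Rightarrow> real" and \<epsilon> :: real
    and m :: "(real^'n) set measure"
  assumes r_ge_1: "r \<ge> 1"
    and blk_less: "\<forall>j. blk j < k + r"
    and blocks_nonempty: "\<forall>i<k+r. block blk i \<noteq> {}"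
    and block_norms: "\<forall>i<k+r. is_block_norm blk i (N i)"
    and sets_m: "sets m = Xd_sets"
    and emeasure_lat_act: "\<forall>g\<in>SLd. \<forall>E\<in>sets m. emeasure m (lat_act g ` E) = emeasure m E"
begin

abbreviation "D \<equiv> k + r - 1"
abbreviation "a t \<equiv> a_mat blk k r t"
abbreviation "S \<equiv> S_eps blk k r N \<epsilon>"
abbreviation "L \<equiv> L_eps blk k r N \<epsilon>"
abbreviation "orb I E \<equiv> orbit_set blk k r I E"

lemma block_norm_N: "i < k + r \<Longrightarrow> block_norm blk i (N i)"
  using block_norms by (simp add: block_norm_def)

lemma bsize_pos: "i < k + r \<Longrightarrow> bsize blk i > 0"
  using blocks_nonempty by (auto simp: bsize_def card_gt_0_iff)

lemma a_SLd: "a t \<in> SLd"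
  using det_a_mat[OF r_ge_1 _ blk_less] bsize_pos[of D] r_ge_1 by (simp add: SLd_def)

lemma a_uminus_mult: "a (\<lambda>i. - t i) ** a t = mat 1"
  by (simp add: a_mat_mult a_mat_zero[unfolded fun_eq_iff])

lemma lat_act_a_uminus: "lat_act (a (\<lambda>i. - t i)) (lat_act (a t) X) = X"
  by (simp add: lat_act_lat_act a_uminus_mult lat_act_mat_1)

lemma lat_act_a_a_uminus: "lat_act (a t) (lat_act (a (\<lambda>i. - t i)) X) = X"
  using lat_act_a_uminus[of "\<lambda>i. - t i"] by simp

lemma a_cong:
  assumes "\<forall>j<D. s j = t j"
  shows "a s = a t"
proof -
  have "expo blk k r s i = expo blk k r t i" for i
    using expo_cong[OF r_ge_1 assms] .
  then show ?thesis
    unfolding a_mat_def by presburger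
qed

lemma N_a_mult: "i < k + r \<Longrightarrow> N i (a t *v v) = exp (expo blk k r t i) * N i v"
  using block_norm.block_cong[OF block_norm_N, of i "a t *v v" "exp (expo blk k r t i) *\<^sub>R v"]
    block_norm.scaleR[OF block_norm_N, of i]
  by (simp add: a_mat_mult_vector block_def)

lemma sets_m_iff: "E \<in> sets m \<longleftrightarrow> E \<subseteq> Xd \<and> {g \<in> SLd. lat g \<in> E} \<in> sets borel"
  using sets_m by (simp add: Xd_sets_def)

lemma N_borel_measurable[measurable]: "i < k + r \<Longrightarrow> N i \<in> borel_measurable borel"
  by (rule block_norm.borel_measurable[OF block_norm_N])

text \<open>\<open>flow_time w\<close> is the time \<open>t\<close> (on its first \<open>D\<close> coordinates) with
  \<open>N\<^sub>i (a\<^sub>-\<^sub>t w) = 1\<close> for all \<open>i < D\<close>; see \<open>flow_time_eq\<close>.\<close>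

definition flow_time :: "real^'n \<Rightarrow> nat \<Rightarrow> real" where
  "flow_time w j = (if j < k then ln (N j w) else if j < D then - ln (N j w) else 0)"

lemma flow_time_eq:
  assumes "\<forall>i<D. N i (a s *v w) = 1"
  shows "\<forall>i<D. N i w > 0" "\<forall>j<D. flow_time w j = - s j"
proof -
  have N_w: "N i w = exp (- expo blk k r s i)" if "i < D" for i
    using assms that N_a_mult[of i s w] by (simp add: exp_minus field_simps)
  show "\<forall>i<D. N i w > 0" "\<forall>j<D. flow_time w j = - s j"
    using N_w by (auto simp: flow_time_def expo_def)
qed

lemma flow_time_borel_measurable[measurable]:
  "(\<lambda>g::real^'n^'n. flow_time (g *v z) j) \<in> borel_measurable borel"
proof (cases "j < D")
  case True
  then have [measurable]: "N j \<in> borel_measurable borel"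
    by (intro N_borel_measurable) simp
  show ?thesis
    unfolding flow_time_def by measurable
next
  case False
  then have "\<not> j < k" "\<not> j < D"
    using r_ge_1 by auto
  then show ?thesis
    by (simp add: flow_time_def)
qed

definition flow_back :: "real^'n \<Rightarrow> real^'n^'n \<Rightarrow> real^'n^'n" where
  "flow_back z g = a (\<lambda>j. - flow_time (g *v z) j) ** g"

lemma flow_back_borel_measurable[measurable]: "flow_back z \<in> borel_measurable borel"
proof -
  have [measurable]: "(\<lambda>g::real^'n^'n. expo blk k r (\<lambda>j. - flow_time (g *v z) j) i) \<in> borel_measurable borel"
    for i unfolding expo_def by measurable
  show ?thesis
    by (intro borel_measurable_vec) (simp add: flow_back_def a_mat_mult_nth)
qed

lemma flow_back_SLd: "g \<in> SLd \<Longrightarrow> flow_back z g \<in> SLd"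
  by (simp add: flow_back_def SLd_mult a_SLd)

lemma orbit_set_subset_Xd: "E \<subseteq> Xd \<Longrightarrow> orb I E \<subseteq> Xd"
  by (auto simp: orbit_set_def Xd_def lat_act_lat SLd_mult a_SLd)

lemma lat_in_orbit_set_iff:
  assumes ES: "E \<subseteq> S" and g: "g \<in> SLd"
    and I: "\<And>s t. \<forall>j<D. s j = t j \<Longrightarrow> s \<in> I \<longleftrightarrow> t \<in> I"
  shows "lat g \<in> orb I E \<longleftrightarrow>
     (\<exists>z\<in>Zvecs. (\<forall>i<D. N i (g *v z) > 0) \<and> flow_time (g *v z) \<in> I \<and> lat (flow_back z g) \<in> E)"
proof
  assume "lat g \<in> orb I E"
  then obtain t Y where tY: "t \<in> I" "Y \<in> E" "lat g = lat_act (a t) Y"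
    by (rule orbit_setE)
  then obtain v where v: "primitive Y v" "v \<in> L"
    using ES by (auto simp: S_eps_def)
  have "a t *v v \<in> lat g"
    using tY(3) v(1) by (auto simp: lat_act_def primitive_def)
  then obtain z where z: "z \<in> Zvecs" "a t *v v = g *v z"
    by (auto simp: lat_def)
  define w where "w = g *v z"
  have "v = a (\<lambda>i. - t i) *v w"
    by (simp add: w_def flip: z(2) add: matrix_vector_mul_assoc a_uminus_mult)
  then have "\<forall>i<D. N i (a (\<lambda>i. - t i) *v w) = 1"
    using v(2) by (simp add: L_eps_def)
  from flow_time_eq[OF this] have w: "\<forall>i<D. N i w > 0" "\<forall>j<D. flow_time w j = t j"
    by auto
  have "flow_time w \<in> I"
    using I[of "flow_time w" t] w(2) tY(1) by auto
  moreover have "a (\<lambda>j. - flow_time w j) = a (\<lambda>j. - t j)"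
    using w(2) by (intro a_cong) auto
  then have "lat (flow_back z g) = Y"
    by (simp add: flow_back_def flip: w_def lat_act_lat add: tY(3) lat_act_a_uminus)
  ultimately show "\<exists>z\<in>Zvecs. (\<forall>i<D. N i (g *v z) > 0) \<and> flow_time (g *v z) \<in> I \<and> lat (flow_back z g) \<in> E"
    using z(1) w(1) tY(2) unfolding w_def by blast
next
  assume "\<exists>z\<in>Zvecs. (\<forall>i<D. N i (g *v z) > 0) \<and> flow_time (g *v z) \<in> I \<and> lat (flow_back z g) \<in> E"
  then obtain z where z: "flow_time (g *v z) \<in> I" "lat (flow_back z g) \<in> E"
    by blast
  have "lat g = lat_act (a (flow_time (g *v z))) (lat (flow_back z g))"
    by (simp add: flow_back_def flip: lat_act_lat add: lat_act_a_a_uminus)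
  then show "lat g \<in> orb I E"
    using z by (auto intro: orbit_setI)
qed

lemma sets_orbit_set:
  assumes E: "E \<in> sets m" "E \<subseteq> S" and J: "J \<in> sets (Pi\<^sub>M {..<D} (\<lambda>_. borel))"
  shows "orb {t. restrict t {..<D} \<in> J} E \<in> sets m"
proof -
  define I where "I = {t. restrict t {..<D} \<in> J}"
  have E_borel[measurable]: "{g \<in> SLd. lat g \<in> E} \<in> sets borel" and "E \<subseteq> Xd"
    using E(1) by (auto simp: sets_m_iff)
  have I: "s \<in> I \<longleftrightarrow> t \<in> I" if "\<forall>j<D. s j = t j" for s t
  proof -
    have "restrict s {..<D} = restrict t {..<D}"
      using that by auto
    then show ?thesis
      by (simp add: I_def)
  qed
  have "{g \<in> SLd. lat g \<in> orb I E} =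
     (\<Union>z\<in>Zvecs. SLd \<inter> {g \<in> space borel. (\<forall>i<D. N i (g *v z) > 0) \<and>
         restrict (flow_time (g *v z)) {..<D} \<in> J \<and> flow_back z g \<in> {g \<in> SLd. lat g \<in> E}})"
    using lat_in_orbit_set_iff[OF E(2) _ I] flow_back_SLd by (auto simp: I_def)
  also have "\<dots> \<in> sets borel"
  proof (intro sets.countable_UN'' countable_Zvecs)
    fix z :: "real^'n"
    have [measurable]: "(\<lambda>g. N i (g *v z)) \<in> borel_measurable borel" if "i < D" for i
      using that by (intro measurable_compose[OF borel_measurable_mult_vector N_borel_measurable]) auto
    have [measurable]: "(\<lambda>g. restrict (flow_time (g *v z)) {..<D}) \<in> measurable borel (Pi\<^sub>M {..<D} (\<lambda>_. borel))"
      by measurable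
    note [measurable] = J sets_SLd
    show "SLd \<inter> {g \<in> space borel. (\<forall>i<D. N i (g *v z) > 0) \<and>
         restrict (flow_time (g *v z)) {..<D} \<in> J \<and> flow_back z g \<in> {g \<in> SLd. lat g \<in> E}} \<in> sets borel"
      by measurable
  qed
  finally show ?thesis
    using orbit_set_subset_Xd[OF \<open>E \<subseteq> Xd\<close>] by (simp add: sets_m_iff I_def)
qed

lemma sets_L: "L \<in> sets borel"
proof -
  have "L = {v \<in> space borel. (\<forall>i<D. N i v = 1) \<and> N D v ^ bsize blk D \<le> \<epsilon>}"
    by (simp add: L_eps_def)
  also have "\<dots> \<in> sets borel"
  proof -
    have [measurable]: "N i \<in> borel_measurable borel" if "i \<le> D" for i
      using that r_ge_1 by (intro N_borel_measurable) auto
    show ?thesis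
      by measurable
  qed
  finally show ?thesis .
qed

lemma S_subset_Xd: "S \<subseteq> Xd"
  by (auto simp: S_eps_def)

lemma sets_S: "S \<in> sets m"
proof -
  have "{g \<in> SLd. lat g \<in> S} = (\<Union>z\<in>{z\<in>Zvecs. z \<noteq> 0 \<and> (\<forall>c. c *\<^sub>R z \<in> Zvecs \<longrightarrow> c \<in> \<int>)}.
      SLd \<inter> {g \<in> space borel. g *v z \<in> L})"
  proof -
    have "lat g \<in> S \<longleftrightarrow> (\<exists>z\<in>Zvecs. z \<noteq> 0 \<and> (\<forall>c. c *\<^sub>R z \<in> Zvecs \<longrightarrow> c \<in> \<int>) \<and> g *v z \<in> L)"
      if g: "g \<in> SLd" for g
    proof
      assume "lat g \<in> S"
      then obtain v where v: "primitive (lat g) v" "v \<in> L"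
        by (auto simp: S_eps_def)
      moreover obtain z where "z \<in> Zvecs" "v = g *v z"
        using v(1) by (auto simp: primitive_def lat_def)
      ultimately show "\<exists>z\<in>Zvecs. z \<noteq> 0 \<and> (\<forall>c. c *\<^sub>R z \<in> Zvecs \<longrightarrow> c \<in> \<int>) \<and> g *v z \<in> L"
        using primitive_lat_iff[OF g] by auto
    next
      assume "\<exists>z\<in>Zvecs. z \<noteq> 0 \<and> (\<forall>c. c *\<^sub>R z \<in> Zvecs \<longrightarrow> c \<in> \<int>) \<and> g *v z \<in> L"
      then show "lat g \<in> S"
        using primitive_lat_iff[OF g] g by (auto simp: S_eps_def Xd_def)
    qed
    then show ?thesis
      by auto
  qed
  also have "\<dots> \<in> sets borel"
  proof (intro sets.countable_UN'' countable_subset[OF _ countable_Zvecs])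
    fix z :: "real^'n"
    show "SLd \<inter> {g \<in> space borel. g *v z \<in> L} \<in> sets borel"
      using sets_L sets_SLd by measurable
  qed auto
  finally show ?thesis
    using S_subset_Xd by (simp add: sets_m_iff)
qed

definition returns_within :: "real \<Rightarrow> (real^'n) set set" where
  "returns_within \<sigma> =
     {X \<in> S. \<exists>u. (\<forall>i<D. \<bar>u i\<bar> \<le> \<sigma>) \<and> (\<exists>i<D. u i \<noteq> 0) \<and> lat_act (a u) X \<in> S}"

lemma returns_within_mono: "\<sigma> \<le> \<sigma>' \<Longrightarrow> returns_within \<sigma> \<subseteq> returns_within \<sigma>'"
  unfolding returns_within_def by (blast intro: order_trans)

lemma sets_returns_within: "returns_within \<sigma> \<in> sets m"
proof -
  define J where "J = (\<Pi>\<^sub>E j\<in>{..<D}. {-\<sigma>..\<sigma>}) - (\<Pi>\<^sub>E j\<in>{..<D}. {0})"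
  define I where "I = {t. restrict t {..<D} \<in> J}"
  have I_iff: "t \<in> I \<longleftrightarrow> (\<forall>j<D. \<bar>t j\<bar> \<le> \<sigma>) \<and> (\<exists>j<D. t j \<noteq> 0)" for t
    by (simp only: I_def J_def mem_Collect_eq Diff_iff restrict_PiE_iff) (force simp: abs_le_iff)
  have "returns_within \<sigma> = S \<inter> orb I S"
  proof (intro set_eqI iffI)
    fix X assume "X \<in> returns_within \<sigma>"
    then obtain u where "X \<in> S" "(\<lambda>i. - u i) \<in> I" "lat_act (a u) X \<in> S"
      unfolding returns_within_def I_iff by auto
    then have "lat_act (a (\<lambda>i. - u i)) (lat_act (a u) X) \<in> orb I S"
      by (intro orbit_setI)
    then show "X \<in> S \<inter> orb I S"
      using \<open>X \<in> S\<close> by (simp add: lat_act_a_uminus)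
  next
    fix X assume "X \<in> S \<inter> orb I S"
    then obtain t Y where "X \<in> S" "t \<in> I" "Y \<in> S" "X = lat_act (a t) Y"
      by (auto elim: orbit_setE)
    then show "X \<in> returns_within \<sigma>"
      unfolding returns_within_def I_iff
      by (intro CollectI conjI exI[of _ "\<lambda>i. - t i"]) (auto simp: lat_act_a_uminus)
  qed
  moreover have "J \<in> sets (Pi\<^sub>M {..<D} (\<lambda>_. borel))"
    unfolding J_def by (intro sets.Diff sets_PiM_I_finite) auto
  ultimately show ?thesis
    using sets_orbit_set[OF sets_S order_refl] sets_S by (simp add: I_def)
qed

lemma orbit_set_Icube_disjoint:
  assumes C: "C \<subseteq> S - returns_within \<sigma>" "C' \<subseteq> S" "C \<inter> C' = {}" and \<tau>: "\<tau> \<le> \<sigma>"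
  shows "orb (Icube k r \<tau>) C \<inter> orb (Icube k r \<tau>) C' = {}"
proof (rule ccontr)
  assume "orb (Icube k r \<tau>) C \<inter> orb (Icube k r \<tau>) C' \<noteq> {}"
  then obtain t Y t' Y' where t: "t \<in> Icube k r \<tau>" "Y \<in> C" and t': "t' \<in> Icube k r \<tau>" "Y' \<in> C'"
    and eq: "lat_act (a t) Y = lat_act (a t') Y'"
    by (auto simp: orbit_set_def)
  define u where "u = (\<lambda>i. t i - t' i)"
  have "lat_act (a u) Y = lat_act (a (\<lambda>i. - t' i)) (lat_act (a t) Y)"
    by (simp add: lat_act_lat_act a_mat_mult u_def)
  then have Y': "lat_act (a u) Y = Y'"
    by (simp add: eq lat_act_a_uminus)
  show False
  proof (cases "\<exists>i<D. u i \<noteq> 0")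
    case True
    have "\<bar>u i\<bar> \<le> \<sigma>" if "i < D" for i
    proof -
      have "0 \<le> t i" "t i \<le> \<tau>" "0 \<le> t' i" "t' i \<le> \<tau>"
        using that t(1) t'(1) by (auto simp: Icube_def)
      then show ?thesis
        using \<tau> unfolding u_def abs_le_iff by linarith
    qed
    then have "Y \<in> returns_within \<sigma>"
      using True Y' t(2) t'(2) C by (auto simp: returns_within_def)
    then show False
      using t(2) C(1) by blast
  next
    case False
    then have "a u = a (\<lambda>_. 0)"
      by (intro a_cong) auto
    then have "Y' = Y"
      using Y' by (simp add: a_mat_zero lat_act_mat_1)
    then show False
      using t(2) t'(2) C(3) by blast
  qed
qed

definition cube_at :: "(nat \<Rightarrow> real) \<Rightarrow> real \<Rightarrow> (nat \<Rightarrow> real) set" where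
  "cube_at c s = {t. \<forall>i<D. c i \<le> t i \<and> t i \<le> c i + s}"

lemma sets_orbit_cube_at:
  assumes "C \<in> sets m" "C \<subseteq> S"
  shows "orb (cube_at c s) C \<in> sets m"
proof -
  have "cube_at c s = {t. restrict t {..<D} \<in> (\<Pi>\<^sub>E i\<in>{..<D}. {c i .. c i + s})}"
    by (auto simp: cube_at_def PiE_iff)
  then show ?thesis
    by (simp only:) (intro sets_orbit_set[OF assms] sets_PiM_I_finite; simp)
qed

lemma Icube_eq_cube_at: "Icube k r s = cube_at (\<lambda>_. 0) s"
  by (simp add: Icube_def cube_at_def)

lemma sets_orbit_Icube: "C \<in> sets m \<Longrightarrow> C \<subseteq> S \<Longrightarrow> orb (Icube k r s) C \<in> sets m"
  unfolding Icube_eq_cube_at by (rule sets_orbit_cube_at)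

lemma orbit_cube_at_eq_image: "orb (cube_at c s) C = lat_act (a c) ` orb (Icube k r s) C"
proof (intro set_eqI iffI)
  fix X assume "X \<in> orb (cube_at c s) C"
  then obtain t Y where t: "t \<in> cube_at c s" "Y \<in> C" "X = lat_act (a t) Y"
    by (rule orbit_setE)
  have "(\<lambda>i. t i - c i) \<in> Icube k r s"
    using t(1) by (auto simp: cube_at_def Icube_def)
  then have "lat_act (a (\<lambda>i. t i - c i)) Y \<in> orb (Icube k r s) C"
    using t(2) by (rule orbit_setI)
  moreover have "X = lat_act (a c) (lat_act (a (\<lambda>i. t i - c i)) Y)"
    using t(3) by (simp add: lat_act_lat_act a_mat_mult)
  ultimately show "X \<in> lat_act (a c) ` orb (Icube k r s) C"
    by blast
next
  fix X assume "X \<in> lat_act (a c) ` orb (Icube k r s) C"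
  then obtain t Y where t: "t \<in> Icube k r s" "Y \<in> C" "X = lat_act (a c) (lat_act (a t) Y)"
    by (auto elim: orbit_setE)
  have "(\<lambda>i. c i + t i) \<in> cube_at c s"
    using t(1) by (auto simp: cube_at_def Icube_def)
  then show "X \<in> orb (cube_at c s) C"
    using t(2,3) orbit_setI by (fastforce simp: lat_act_lat_act a_mat_mult)
qed

lemma emeasure_orbit_cube_at:
  assumes "C \<in> sets m" "C \<subseteq> S"
  shows "emeasure m (orb (cube_at c s) C) = emeasure m (orb (Icube k r s) C)"
  unfolding orbit_cube_at_eq_image using emeasure_lat_act a_SLd sets_orbit_Icube[OF assms] by blast

lemma emeasure_orbit_Icube_mono:
  assumes "C \<in> sets m" "C \<subseteq> S" "s \<le> s'"
  shows "emeasure m (orb (Icube k r s) C) \<le> emeasure m (orb (Icube k r s') C)"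
  using assms by (intro emeasure_mono orbit_set_mono sets_orbit_Icube) (auto simp: Icube_def)

lemma Icube_subset_UN_cube_at:
  assumes "s > 0" "j \<ge> 1"
  shows "Icube k r (real j * s) \<subseteq> (\<Union>p\<in>(\<Pi>\<^sub>E i\<in>{..<D}. {..<j}). cube_at (\<lambda>i. s * real (p i)) s)"
proof
  fix t assume t: "t \<in> Icube k r (real j * s)"
  define p where "p = (\<lambda>i\<in>{..<D}. min (j - 1) (nat \<lfloor>t i / s\<rfloor>))"
  have "p \<in> (\<Pi>\<^sub>E i\<in>{..<D}. {..<j})"
    using assms(2) by (auto simp: p_def)
  moreover have "t \<in> cube_at (\<lambda>i. s * real (p i)) s"
    unfolding cube_at_def
  proof (intro CollectI allI impI)
    fix i assume i: "i < D"
    then have ti: "0 \<le> t i" "t i \<le> real j * s"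
      using t by (auto simp: Icube_def)
    have fl: "real_of_int \<lfloor>t i / s\<rfloor> \<le> t i / s" "t i / s < real_of_int \<lfloor>t i / s\<rfloor> + 1"
      by linarith+
    have fl0: "\<lfloor>t i / s\<rfloor> \<ge> 0"
      using ti assms(1) by simp
    show "s * real (p i) \<le> t i \<and> t i \<le> s * real (p i) + s"
    proof (cases "nat \<lfloor>t i / s\<rfloor> \<le> j - 1")
      case True
      then have "real (p i) = real_of_int \<lfloor>t i / s\<rfloor>"
        using i fl0 by (simp add: p_def)
      moreover have "s * real_of_int \<lfloor>t i / s\<rfloor> \<le> t i"
        using fl(1) assms(1) by (simp add: le_divide_eq mult.commute)
      moreover have "t i < s * real_of_int \<lfloor>t i / s\<rfloor> + s"
        using fl(2) assms(1) by (simp add: divide_less_eq algebra_simps)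
      ultimately show ?thesis
        by simp
    next
      case False
      then have "int j \<le> \<lfloor>t i / s\<rfloor>"
        using assms(2) fl0 by linarith
      then have "real j \<le> t i / s"
        by (simp add: le_floor_iff)
      then have "t i = real j * s"
        using ti assms(1) by (simp add: field_simps)
      moreover have "p i = j - 1"
        using False i by (simp add: p_def)
      ultimately show ?thesis
        using assms by (simp add: of_nat_diff algebra_simps)
    qed
  qed
  ultimately show "t \<in> (\<Union>p\<in>(\<Pi>\<^sub>E i\<in>{..<D}. {..<j}). cube_at (\<lambda>i. s * real (p i)) s)"
    by blast
qed

lemma emeasure_orbit_Icube_multiple:
  assumes "C \<in> sets m" "C \<subseteq> S" "s > 0" "j \<ge> 1"
  shows "emeasure m (orb (Icube k r (real j * s)) C) \<le> of_nat (j ^ D) * emeasure m (orb (Icube k r s) C)"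
proof -
  let ?P = "\<Pi>\<^sub>E i\<in>{..<D}. {..<j}"
  let ?cube = "\<lambda>p. orb (cube_at (\<lambda>i. s * real (p i)) s) C"
  have "finite ?P"
    by (intro finite_PiE) auto
  have "orb (Icube k r (real j * s)) C \<subseteq> (\<Union>p\<in>?P. ?cube p)"
    unfolding orbit_set_UN_times[symmetric]
    by (rule orbit_set_mono[OF Icube_subset_UN_cube_at[OF assms(3,4)]])
  then have "emeasure m (orb (Icube k r (real j * s)) C) \<le> emeasure m (\<Union>p\<in>?P. ?cube p)"
    using sets_orbit_cube_at[OF assms(1,2)] \<open>finite ?P\<close> by (intro emeasure_mono) auto
  also have "\<dots> \<le> (\<Sum>p\<in>?P. emeasure m (?cube p))"
    using sets_orbit_cube_at[OF assms(1,2)] \<open>finite ?P\<close> by (intro emeasure_subadditive_finite) auto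
  also have "\<dots> = of_nat (card ?P) * emeasure m (orb (Icube k r s) C)"
    by (simp add: emeasure_orbit_cube_at[OF assms(1,2)])
  also have "card ?P = j ^ D"
    by (simp add: card_PiE)
  finally show ?thesis .
qed

lemma N_le_max_of_mem_L:
  assumes "v \<in> L" "i < k + r"
  shows "N i v \<le> max 1 \<epsilon>"
proof (cases "i < D")
  case True
  then show ?thesis
    using assms by (simp add: L_eps_def)
next
  case False
  then have "i = D"
    using assms(2) by linarith
  then have last: "N i v ^ bsize blk i \<le> \<epsilon>"
    using assms(1) by (simp add: L_eps_def)
  show ?thesis
  proof (cases "N i v \<le> 1")
    case False
    then have "N i v ^ 1 \<le> N i v ^ bsize blk i"
      using bsize_pos[OF assms(2)] by (intro power_increasing) auto
    then show ?thesis
      using last by simp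
  qed simp
qed

lemma N_le_of_a_mult_mem_L:
  assumes u: "\<forall>j<D. \<bar>u j\<bar> \<le> 1" and w: "a u *v w \<in> L" and i: "i < k + r"
  shows "N i w \<le> exp (1 + (\<Sum>j<D. real (bsize blk j)) / real (bsize blk D)) * max 1 \<epsilon>"
    (is "_ \<le> exp ?K * _")
proof -
  have "N i w = exp (- expo blk k r u i) * N i (a u *v w)"
    by (simp add: N_a_mult[OF i] mult.assoc[symmetric] exp_add[symmetric])
  also have "\<dots> \<le> exp ?K * max 1 \<epsilon>"
  proof (rule mult_mono)
    have "bsize blk D > 0"
      using bsize_pos r_ge_1 by simp
    then have "\<bar>expo blk k r u i\<bar> \<le> ?K"
      by (rule abs_expo_le[OF r_ge_1 _ u])
    then show "exp (- expo blk k r u i) \<le> exp ?K"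
      unfolding exp_le_cancel_iff by linarith
  qed (use N_le_max_of_mem_L[OF w i] block_norm.nonneg[OF block_norm_N[OF i]] in auto)
  finally show ?thesis .
qed

lemma norm_bounded_by_N:
  obtains C where "\<And>w R. \<forall>i<k+r. N i w \<le> R \<Longrightarrow> norm w \<le> C * R"
proof -
  have "\<exists>c>0. \<forall>v l. l \<in> block blk i \<longrightarrow> c * \<bar>v$l\<bar> \<le> N i v" if i: "i < k + r" for i
  proof -
    obtain c where "c > 0" "\<And>v l. l \<in> block blk i \<Longrightarrow> c * \<bar>v$l\<bar> \<le> N i v"
      using block_norm.component_le[OF block_norm_N[OF i]] blocks_nonempty i by blast
    then show ?thesis
      by blast
  qed
  then obtain c where c: "\<And>i. i < k + r \<Longrightarrow> c i > 0 \<and> (\<forall>v l. l \<in> block blk i \<longrightarrow> c i * \<bar>v$l\<bar> \<le> N i v)"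
    by metis
  define c0 where "c0 = Min (c ` {..<k+r})"
  have "c ` {..<k+r} \<noteq> {}"
    using r_ge_1 by auto
  then have c0: "c0 > 0" "\<And>i. i < k + r \<Longrightarrow> c0 \<le> c i"
    using c by (auto simp: c0_def Min_gr_iff)
  show thesis
  proof (rule that)
    fix w :: "real^'n" and R assume R: "\<forall>i<k+r. N i w \<le> R"
    have comp: "\<bar>w$l\<bar> \<le> R / c0" for l
    proof -
      have "blk l < k + r" "l \<in> block blk (blk l)"
        using blk_less by (auto simp: block_def)
      then have "c0 * \<bar>w$l\<bar> \<le> c (blk l) * \<bar>w$l\<bar>" "c (blk l) * \<bar>w$l\<bar> \<le> N (blk l) w"
        using c c0 by (auto intro: mult_right_mono)
      then have "c0 * \<bar>w$l\<bar> \<le> N (blk l) w"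
        by linarith
      moreover have "N (blk l) w \<le> R"
        using R \<open>blk l < k + r\<close> by blast
      ultimately show ?thesis
        using c0(1) by (simp add: field_simps)
    qed
    have "(\<Sum>l\<in>UNIV. \<bar>w$l\<bar>) \<le> (\<Sum>l\<in>(UNIV::'n set). R / c0)"
      by (rule sum_mono) (rule comp)
    then have "norm w \<le> (\<Sum>l\<in>(UNIV::'n set). R / c0)"
      using norm_le_l1_cart[of w] by linarith
    then show "norm w \<le> (CARD('n) / c0) * R"
      by simp
  qed
qed

lemma finite_Zvecs_N_le:
  assumes "g \<in> SLd"
  shows "finite {z \<in> Zvecs. \<forall>i<k+r. N i (g *v z) \<le> R}"
proof -
  obtain C where "\<And>w R. \<forall>i<k+r. N i w \<le> R \<Longrightarrow> norm w \<le> C * R"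
    using norm_bounded_by_N by blast
  then show ?thesis
    by (intro finite_subset[OF _ finite_Zvecs_norm_le[OF SLd_invertible[OF assms], of "C * R"]]) auto
qed

lemma finite_return_times:
  assumes "X \<in> S"
  shows "finite ((\<lambda>u. restrict u {..<D}) ` {u. (\<forall>i<D. \<bar>u i\<bar> \<le> 1) \<and> lat_act (a u) X \<in> S})"
proof -
  obtain h where h: "h \<in> SLd" "X = lat h"
    using assms S_subset_Xd by (auto simp: Xd_def)
  define R where "R = exp (1 + (\<Sum>j<D. real (bsize blk j)) / real (bsize blk D)) * max 1 \<epsilon>"
  have "(\<lambda>u. restrict u {..<D}) ` {u. (\<forall>i<D. \<bar>u i\<bar> \<le> 1) \<and> lat_act (a u) X \<in> S}
      \<subseteq> (\<lambda>z. restrict (\<lambda>j. - flow_time (h *v z) j) {..<D}) ` {z \<in> Zvecs. \<forall>i<k+r. N i (h *v z) \<le> R}"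
  proof clarify
    fix u assume u: "\<forall>i<D. \<bar>u i\<bar> \<le> 1" "lat_act (a u) X \<in> S"
    then obtain v where "primitive (lat_act (a u) X) v" "v \<in> L"
      by (auto simp: S_eps_def)
    then obtain z where z: "z \<in> Zvecs" "a u *v (h *v z) \<in> L"
      by (auto simp: primitive_def h(2) lat_act_def lat_def)
    then have "\<forall>j<D. flow_time (h *v z) j = - u j"
      by (intro flow_time_eq) (simp add: L_eps_def)
    then have "restrict u {..<D} = restrict (\<lambda>j. - flow_time (h *v z) j) {..<D}"
      by auto
    moreover have "\<forall>i<k+r. N i (h *v z) \<le> R"
      using N_le_of_a_mult_mem_L[OF u(1) z(2)] by (simp add: R_def)
    ultimately show "restrict u {..<D}
        \<in> (\<lambda>z. restrict (\<lambda>j. - flow_time (h *v z) j) {..<D}) ` {z \<in> Zvecs. \<forall>i<k+r. N i (h *v z) \<le> R}"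
      using z(1) by blast
  qed
  then show ?thesis
    using finite_Zvecs_N_le[OF h(1)] by (rule finite_subset[OF _ finite_imageI])
qed

lemma ex_not_returns_within:
  assumes X: "X \<in> S"
  shows "\<exists>j. X \<notin> returns_within (1 / real (Suc j))"
proof (rule ccontr)
  assume "\<nexists>j. X \<notin> returns_within (1 / real (Suc j))"
  then have "\<forall>j. \<exists>u. (\<forall>i<D. \<bar>u i\<bar> \<le> 1 / real (Suc j)) \<and> (\<exists>i<D. u i \<noteq> 0) \<and> lat_act (a u) X \<in> S"
    by (simp add: returns_within_def)
  then obtain u where u: "\<And>j. \<forall>i<D. \<bar>u j i\<bar> \<le> 1 / real (Suc j)" "\<And>j. \<exists>i<D. u j i \<noteq> 0"
      "\<And>j. lat_act (a (u j)) X \<in> S"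
    by (metis (no_types))
  have "\<bar>u j i\<bar> \<le> 1" if "i < D" for i j
    using u(1)[of j] that order_trans[of _ "1 / real (Suc j)" 1] by simp
  then have "range (\<lambda>j. restrict (u j) {..<D})
      \<subseteq> (\<lambda>u. restrict u {..<D}) ` {u. (\<forall>i<D. \<bar>u i\<bar> \<le> 1) \<and> lat_act (a u) X \<in> S}"
    using u(3) by blast
  then have "finite (range (\<lambda>j. restrict (u j) {..<D}))"
    using finite_return_times[OF X] by (rule finite_subset)
  then obtain j0 where j0: "infinite {j. restrict (u j) {..<D} = restrict (u j0) {..<D}}"
    using pigeonhole_infinite[OF infinite_UNIV_nat] by auto
  obtain i0 where i0: "i0 < D" "u j0 i0 \<noteq> 0"
    using u(2) by blast
  obtain j1 where j1: "j1 \<ge> nat \<lceil>1 / \<bar>u j0 i0\<bar>\<rceil>" "restrict (u j1) {..<D} = restrict (u j0) {..<D}"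
    using j0 unfolding infinite_nat_iff_unbounded_le by blast
  have "u j1 i0 = u j0 i0"
    using fun_cong[OF j1(2), of i0] i0(1) by simp
  then have "\<bar>u j0 i0\<bar> \<le> 1 / real (Suc j1)"
    using u(1)[of j1] i0(1) by metis
  moreover have "1 / real (Suc j1) < \<bar>u j0 i0\<bar>"
  proof -
    have "1 / \<bar>u j0 i0\<bar> \<le> real j1"
      using j1(1) by linarith
    then show ?thesis
      using i0(2) by (simp add: field_simps)
  qed
  ultimately show False
    by simp
qed

lemma mu_S_eq_SUP_fact_scale:
  assumes "C \<in> sets m" "C \<subseteq> S"
  shows "mu_S m blk k r C =
    (SUP n. ennreal (1 / fact_scale n ^ D) * emeasure m (orb (Icube k r (fact_scale n)) C))"
  unfolding mu_S_def
  using emeasure_orbit_Icube_mono[OF assms] emeasure_orbit_Icube_multiple[OF assms]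
  by (intro SUP_rescaled_eq_SUP_sequence fact_scale_pos LIMSEQ_fact_scale)

lemma measure_space_SUP_fact_scale:
  "measure_space S {E \<in> sets m. E \<subseteq> S}
     (\<lambda>E. SUP n. ennreal (1 / fact_scale n ^ D) * emeasure m (orb (Icube k r (fact_scale n)) E))"
proof (rule measure_space_SUP_emeasure_images)
  show "sigma_algebra S {E \<in> sets m. E \<subseteq> S}"
    by (rule sigma_algebra_subsets[OF sets_S])
  show "incseq (\<lambda>j. S - returns_within (1 / real (Suc j)))"
    by (intro monoI Diff_mono order_refl returns_within_mono) (simp add: frac_le)
  show "range (\<lambda>j. S - returns_within (1 / real (Suc j))) \<subseteq> {E \<in> sets m. E \<subseteq> S}"
    using sets_S sets_returns_within by auto
  show "(\<Union>j. S - returns_within (1 / real (Suc j))) = S"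
    using ex_not_returns_within by auto
  fix E assume E: "E \<in> {E \<in> sets m. E \<subseteq> S}"
  show "orb (Icube k r (fact_scale n)) E \<in> sets m" for n
    using E by (intro sets_orbit_Icube) auto
  show "incseq (\<lambda>n. ennreal (1 / fact_scale n ^ D) * emeasure m (orb (Icube k r (fact_scale n)) E))"
    using E emeasure_orbit_Icube_multiple
    by (intro incseq_rescaled[where q="\<lambda>n. Suc (Suc n)"] fact_scale_pos fact_scale_Suc) auto
next
  fix j n :: nat and E E'
  assume "j \<le> n" "E \<subseteq> S - returns_within (1 / real (Suc j))"
    "E' \<subseteq> S - returns_within (1 / real (Suc j))" "E \<inter> E' = {}"
  moreover have "fact_scale n \<le> 1 / real (Suc j)"
    using \<open>j \<le> n\<close> by (rule fact_scale_le)
  ultimately show "orb (Icube k r (fact_scale n)) E \<inter> orb (Icube k r (fact_scale n)) E' = {}"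
    by (intro orbit_set_Icube_disjoint) auto
qed (rule orbit_set_Union)

end

theorem proposition5p6:
  fixes blk :: "'n::finite \<Rightarrow> nat" and k r :: nat
    and N :: "nat \<Rightarrow> real^'n \<Rightarrow> real" and \<epsilon> :: real
    and m :: "(real^'n) set measure"
  assumes "k \<ge> 1" "r \<ge> 1"
    and "\<forall>j. blk j < k + r"
    and "\<forall>i<k+r. block blk i \<noteq> {}"
    and "\<forall>i<k+r. is_block_norm blk i (N i)"
    and "\<epsilon> > 0"
    and "space m = Xd" "sets m = Xd_sets" "emeasure m (space m) = 1"
    and "\<forall>g\<in>SLd. \<forall>E\<in>sets m. emeasure m (lat_act g ` E) = emeasure m E"
  shows "measure_space (S_eps blk k r N \<epsilon>)
           {E \<in> sets m. E \<subseteq> S_eps blk k r N \<epsilon>} (mu_S m blk k r)"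
proof -
  interpret cross_section blk k r N \<epsilon> m
    using assms by unfold_locales auto
  show ?thesis
    using measure_space_SUP_fact_scale by (rule measure_space_cong) (simp add: mu_S_eq_SUP_fact_scale)
qed

end
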